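(* Let $\rho_{AB}\in\mathcal{S}_\le(\mathcal{H}_{AB})$. Then $$I_{\max}(A:B)_\rho=H_0(A)_\rho-H_{\min}(A|B)_{\rho_{B|A}},$$ where $H_0(A)_\rho=\log\mathrm{rank}(\rho_A)$ and $\rho_{B|A}=(\rho_A\otimes\mathbb{1}_B)^{-1/2}\frac{\rho_{AB}}{\mathrm{rank}(\rho_A)}(\rho_A\otimes\mathbb{1}_B)^{-1/2}$, with generalized inverses.
   Context: Finite-dimensional Hilbert spaces; logarithms base 2. $\mathcal{S}_\le(\mathcal{H})$: positive semidefinite operators of trace $\le1$; $\mathcal{S}_=(\mathcal{H})$: trace 1. For $\rho\ge0$, the generalized inverse $\rho^{-1}$ is the inverse on the support of $\rho$ (zero on its kernel), and $\rho^{-1/2}$ likewise. $D_{\max}(\rho\|\sigma)=\inf\{\lambda\in\mathbb{R}:2^\lambda\sigma\ge\rho\}$. $H_{\min}(A|B)_\rho=-\inf_{\sigma_B\in\mathcal{S}_=(\mathcal{H}_B)}D_{\max}(\rho_{AB}\|\mathbb{1}_A\otimes\sigma_B)$. $I_{\max}(A:B)_\rho=\inf_{\sigma_B\in\mathcal{S}_=(\mathcal{H}_B)}D_{\max}(\rho_{AB}\|\rho_A\otimes\sigma_B)$. *)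

theory Defs
  imports "HOL-Analysis.Analysis"
begin

text \<open>Operators on a finite-dimensional Hilbert space with orthonormal basis indexed
  by a finite type 'n are complex matrices of type complex^'n^'n.  The bipartite space
  H_AB has basis indexed by 'a \<times> 'b.\<close>

definition adj :: "complex^'n^'m \<Rightarrow> complex^'m^'n" where
  "adj A = (\<chi> i j. cnj (A $ j $ i))"

definition hermitian :: "complex^'n^'n \<Rightarrow> bool" where
  "hermitian A \<longleftrightarrow> adj A = A"

definition psd :: "complex^'n^'n \<Rightarrow> bool" where
  "psd A \<longleftrightarrow> hermitian A \<and>
     (\<forall>x :: complex^'n. 0 \<le> Re (\<Sum>i\<in>UNIV. cnj (x $ i) * (A *v x) $ i))"

definition loewner_le :: "complex^'n^'n \<Rightarrow> complex^'n^'n \<Rightarrow> bool" where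
  "loewner_le A B \<longleftrightarrow> psd (B - A)"

definition trace :: "complex^'n^'n \<Rightarrow> complex" where
  "trace A = (\<Sum>i\<in>UNIV. A $ i $ i)"

definition subnormalized_state :: "complex^'n^'n \<Rightarrow> bool" where
  "subnormalized_state \<rho> \<longleftrightarrow> psd \<rho> \<and> Re (trace \<rho>) \<le> 1"

definition normalized_state :: "complex^'n^'n \<Rightarrow> bool" where
  "normalized_state \<rho> \<longleftrightarrow> psd \<rho> \<and> trace \<rho> = 1"

definition kron :: "complex^'a^'a \<Rightarrow> complex^'b^'b \<Rightarrow> complex^('a \<times> 'b)^('a \<times> 'b)" where
  "kron A B = (\<chi> p q. A $ fst p $ fst q * B $ snd p $ snd q)"

definition ptrace_B :: "complex^('a \<times> 'b::finite)^('a \<times> 'b) \<Rightarrow> complex^'a^'a" where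
  "ptrace_B \<rho> = (\<chi> i j. \<Sum>b\<in>UNIV. \<rho> $ (i, b) $ (j, b))"

definition unitary :: "complex^'n^'n \<Rightarrow> bool" where
  "unitary U \<longleftrightarrow> U ** adj U = mat 1 \<and> adj U ** U = mat 1"

definition diag_mat :: "('n \<Rightarrow> real) \<Rightarrow> complex^'n^'n" where
  "diag_mat d = (\<chi> i j. if i = j then complex_of_real (d i) else 0)"

text \<open>Functional calculus for hermitian matrices via a spectral decomposition
  A = U diag(d) U^*, giving f(A) = U diag(f o d) U^* (independent of the choice).\<close>
definition mat_fun :: "(real \<Rightarrow> real) \<Rightarrow> complex^'n^'n \<Rightarrow> complex^'n^'n" where
  "mat_fun f A = (SOME X. \<exists>U d. unitary U \<and> A = U ** diag_mat d ** adj U \<and>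
                              X = U ** diag_mat (f \<circ> d) ** adj U)"

definition gen_inv_sqrt :: "complex^'n^'n \<Rightarrow> complex^'n^'n" where
  "gen_inv_sqrt A = mat_fun (\<lambda>t. if t > 0 then 1 / sqrt t else 0) A"

text \<open>Max-relative entropy, extended-real valued (inf of empty set = +\<infinity>).\<close>
definition Dmax :: "complex^'n^'n \<Rightarrow> complex^'n^'n \<Rightarrow> ereal" where
  "Dmax \<rho> \<sigma> = Inf {ereal l | l. loewner_le \<rho> ((2 powr l) *\<^sub>R \<sigma>)}"

definition Hmin :: "complex^('a::finite \<times> 'b::finite)^('a \<times> 'b) \<Rightarrow> ereal" where
  "Hmin \<rho> = - Inf {Dmax \<rho> (kron (mat 1 :: complex^'a^'a) \<sigma>) | \<sigma> :: complex^'b^'b. normalized_state \<sigma>}"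

definition Imax :: "complex^('a::finite \<times> 'b::finite)^('a \<times> 'b) \<Rightarrow> ereal" where
  "Imax \<rho> = Inf {Dmax \<rho> (kron (ptrace_B \<rho>) \<sigma>) | \<sigma> :: complex^'b^'b. normalized_state \<sigma>}"

definition H0_A :: "complex^('a::finite \<times> 'b::finite)^('a \<times> 'b) \<Rightarrow> ereal" where
  "H0_A \<rho> = (if rank (ptrace_B \<rho>) = 0 then -\<infinity> else ereal (log 2 (real (rank (ptrace_B \<rho>)))))"

definition cond_B_given_A :: "complex^('a::finite \<times> 'b::finite)^('a \<times> 'b) \<Rightarrow> complex^('a \<times> 'b)^('a \<times> 'b)" where
  "cond_B_given_A \<rho> =
     (let M = gen_inv_sqrt (kron (ptrace_B \<rho>) (mat 1 :: complex^'b^'b))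
      in M ** ((1 / real (rank (ptrace_B \<rho>))) *\<^sub>R \<rho>) ** M)"

end

theory Submission
  imports Defs
begin

(*
  Write rho_A for the partial trace of rho, r = rank rho_A, K = rho_A (x) 1 and
  M = K^(-1/2) (generalized inverse square root), so that rho_{B|A} = M rho M / r.
  Two facts drive the argument:
  (i)  ker K is contained in ker rho: rho lives on the support of rho_A (x) 1.  This follows
       from positivity and the block decompositions rho_A = sum_b E_b rho E_b^* and
       K = sum_b E_b^* rho_A E_b.
  (ii) for every psd T commuting with K and every c >= 0:
       rho <= c K T  <-->  M rho M <= c T   (Loewner order).
  Taking T = 1 (x) sigma, so that K T = rho_A (x) sigma, and c = 2^l shows that the feasible
  exponents of Dmax(rho_{B|A} || 1 (x) sigma) are those of Dmax(rho || rho_A (x) sigma) shifted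
  by -log r, for every state sigma.  Minimizing over sigma gives
  Hmin(A|B)_{rho_{B|A}} = log r - Imax(A:B)_rho.  If rho_A = 0 then rho = 0 by (i) and both
  sides of the identity are -infinity.
*)

lemma scaleR_vec_nth: "(c *\<^sub>R x) $ i = complex_of_real c * (x $ i :: complex)"
  by (simp only: vector_scaleR_component) (simp add: scaleR_conv_of_real)

lemma scaleR_mat_nth: "(c *\<^sub>R A) $ i $ j = complex_of_real c * (A $ i $ j :: complex)"
  by (simp only: vector_scaleR_component) (simp add: scaleR_conv_of_real)

lemma matrix_scaleR_left: "(c *\<^sub>R A) ** B = c *\<^sub>R (A ** (B::complex^'n^'m))"
  by (rule scalar_matrix_assoc[symmetric])

lemma matrix_scaleR_right: "A ** (c *\<^sub>R B) = c *\<^sub>R (A ** (B::complex^'n^'m))"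
  by (simp add: matrix_scalar_ac scalar_matrix_assoc)

lemma matrix_diff_left: "(A - B) ** C = A ** C - B ** (C::'a::ring_1^'n^'m)"
  by (simp add: vec_eq_iff matrix_matrix_mult_def left_diff_distrib sum_subtractf)

lemma matrix_diff_right: "C ** (A - B) = C ** A - C ** (B::'a::ring_1^'n^'m)"
  by (simp add: vec_eq_iff matrix_matrix_mult_def right_diff_distrib sum_subtractf)

lemma matrix_add_left: "(A + B) ** C = A ** C + B ** (C::'a::ring_1^'n^'m)"
  by (simp add: vec_eq_iff matrix_matrix_mult_def distrib_right sum.distrib)

lemma scaleR_mv: "(c *\<^sub>R A) *v x = c *\<^sub>R (A *v (x::complex^'n))"
  by (simp add: vec_eq_iff matrix_vector_mult_def scaleR_mat_nth scaleR_vec_nth sum_distrib_left mult_ac)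
    (simp add: scaleR_conv_of_real sum_distrib_left mult_ac)

lemma mv_scaleR: "A *v (c *\<^sub>R x) = c *\<^sub>R (A *v (x :: complex^'n))"
  using linear_iff matrix_vector_mul_linear by blast

lemma scaleR_as_smult: "c *\<^sub>R x = (complex_of_real c) *s (x :: complex^'n)"
  by (simp add: vec_eq_iff) (simp add: scaleR_conv_of_real)

lemma mat_sum_nth: "(sum M S) $ i $ j = (\<Sum>b\<in>S. M b $ i $ j)"
  by (simp add: sum_component)

lemma mat_sum_mv: "(sum M S) *v x = (\<Sum>b\<in>S. M b *v x)"
  by (simp add: vec_eq_iff matrix_vector_mult_def sum_component mat_sum_nth sum_distrib_right)
    (rule allI, rule sum.swap)

lemma mv_sum: "A *v (sum f S) = (\<Sum>b\<in>S. A *v f b)"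
  by (simp add: vec_eq_iff matrix_vector_mult_def sum_component sum_distrib_left)
    (rule allI, rule sum.swap)

lemma sum_if_eq:
  "(\<And>k. f k = (if k = c then g else 0)) \<Longrightarrow> (\<Sum>k\<in>(UNIV::'c::finite set). f k) = (g::'x::comm_monoid_add)"
  by simp

lemma mv_axis: "(A *v axis j 1) $ i = A $ i $ (j::'n::finite)"
  by (simp only: matrix_vector_mult_def axis_def vec_lambda_beta) (rule sum_if_eq[where c=j], auto)

lemma mv_zero_imp: "(\<And>x. A *v x = 0) \<Longrightarrow> A = (0::complex^'n^'m)"
  by (simp add: vec_eq_iff flip: mv_axis)

lemma rank_0_imp: fixes A :: "complex^'n^'m" assumes "rank A = 0" shows "A = 0"
proof -
  have "rows A \<subseteq> {0}" using assms unfolding row_rank_def_gen by simp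
  then have "row i A = 0" for i unfolding rows_def by auto
  then show ?thesis by (simp add: vec_eq_iff row_def)
qed

subsection \<open>Adjoints and the complex inner product\<close>

definition cinner :: "complex^'n \<Rightarrow> complex^'n \<Rightarrow> complex" where
  "cinner x y = (\<Sum>i\<in>UNIV. cnj (x $ i) * y $ i)"

lemma psd_cinner: "psd A \<longleftrightarrow> hermitian A \<and> (\<forall>x. 0 \<le> Re (cinner x (A *v x)))"
  unfolding psd_def cinner_def by simp

lemma adj_adj[simp]: "adj (adj A) = A"
  by (simp add: adj_def vec_eq_iff)

lemma adj_mult: "adj (A ** B) = adj B ** adj A"
  by (simp add: adj_def vec_eq_iff matrix_matrix_mult_def mult.commute)

lemma adj_add: "adj (A + B) = adj A + adj B"
  by (simp add: adj_def vec_eq_iff)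

lemma adj_scaleR: "adj (c *\<^sub>R A) = c *\<^sub>R adj A"
  by (simp add: adj_def vec_eq_iff scaleR_mat_nth)

lemma adj_one[simp]: "adj (mat 1) = mat 1"
  by (simp add: adj_def vec_eq_iff mat_def)

lemma cinner_adj: "cinner x (A *v y) = cinner (adj A *v x) y"
  by (simp add: cinner_def adj_def matrix_vector_mult_def sum_distrib_left sum_distrib_right
      mult_ac) (rule sum.swap)

lemma cinner_add_right: "cinner x (y + z) = cinner x y + cinner x z"
  by (simp add: cinner_def distrib_left sum.distrib)

lemma cinner_add_left: "cinner (x + y) z = cinner x z + cinner y z"
  by (simp add: cinner_def distrib_right sum.distrib)

lemma cinner_diff_right: "cinner x (y - z) = cinner x y - cinner x z"
  by (simp add: cinner_def right_diff_distrib sum_subtractf)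

lemma cinner_smult_right: "cinner x (c *s y) = c * cinner x y"
  by (simp add: cinner_def sum_distrib_left mult_ac)

lemma cinner_smult_left: "cinner (c *s x) y = cnj c * cinner x y"
  by (simp add: cinner_def sum_distrib_left mult_ac)

lemma cinner_scaleR_right: "cinner x (c *\<^sub>R y) = of_real c * cinner x y"
  by (simp add: scaleR_as_smult cinner_smult_right)

lemma cinner_scaleR_left: "cinner (c *\<^sub>R x) y = of_real c * cinner x y"
  by (simp add: scaleR_as_smult cinner_smult_left)

lemma cinner_sum_right: "cinner x (sum f F) = (\<Sum>j\<in>F. cinner x (f j))"
  by (simp add: cinner_def sum_distrib_left sum_component) (rule sum.swap)

lemma cinner_zero_right[simp]: "cinner x 0 = 0"
  by (simp add: cinner_def)

lemma cinner_cnj: "cnj (cinner x y) = cinner y x"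
  by (simp add: cinner_def mult.commute)

lemma cinner_axis: "cinner v (axis i 1) = cnj (v $ i)"
  unfolding cinner_def axis_def by (simp add: if_distrib cong: if_cong)

lemma cinner_axis_left: "cinner (axis i 1) v = v $ i"
  using cinner_axis[of v i] cinner_cnj[of v "axis i 1"] by simp

lemma cinner_self_real: "cinner x x = of_real (\<Sum>i\<in>UNIV. (cmod (x $ i))\<^sup>2)"
  unfolding cinner_def of_real_sum
  by (rule sum.cong) (auto simp: complex_norm_square[symmetric] mult.commute)

lemma norm_sq_cinner: "(norm x)\<^sup>2 = Re (cinner x x)"
  by (simp add: norm_vec_def L2_set_def cinner_self_real sum_nonneg)

lemma cinner_self_ge0: "0 \<le> Re (cinner x x)"
  by (simp add: cinner_self_real sum_nonneg)

lemma cinner_self_Re_eq0: "Re (cinner x x) = 0 \<longleftrightarrow> x = 0"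
  by (metis norm_eq_zero norm_sq_cinner zero_eq_power2)

lemma cinner_self_eq0: "cinner x x = 0 \<longleftrightarrow> x = 0"
  by (metis cinner_self_Re_eq0 cinner_zero_right zero_complex.sel(1))

lemma hermitian_cinner: "hermitian A \<Longrightarrow> cinner x (A *v y) = cinner (A *v x) y"
  unfolding hermitian_def by (metis cinner_adj)

lemma hermitian_quad_real: "hermitian A \<Longrightarrow> Im (cinner x (A *v x)) = 0"
  using hermitian_cinner[of A x x] cinner_cnj[of x "A *v x"]
  by (metis cnj.simps(2) neg_equal_zero)

lemma hermitian_Re_cinner_swap: "hermitian A \<Longrightarrow> Re (cinner x (A *v y)) = Re (cinner y (A *v x))"
  using hermitian_cinner[of A x y] cinner_cnj[of y "A *v x"] by (metis cnj.sel(1))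

lemma continuous_cinner_right: "continuous_on S (\<lambda>x. cinner v (x :: complex^'n))"
  unfolding cinner_def by (intro continuous_intros)

lemma continuous_quad: "continuous_on S (\<lambda>x. Re (cinner x (A *v (x :: complex^'n))))"
  unfolding cinner_def matrix_vector_mult_def
  by (simp only: vec_lambda_beta) (intro continuous_intros)

subsection \<open>Positive semidefinite matrices\<close>

lemma hermitian_conj: "hermitian X \<Longrightarrow> hermitian (adj Y ** X ** Y)"
  unfolding hermitian_def by (simp add: adj_mult matrix_mul_assoc)

lemma psd_conj: assumes "psd X" shows "psd (adj Y ** X ** Y)"
  unfolding psd_cinner
proof (intro conjI allI)
  show "hermitian (adj Y ** X ** Y)" using assms hermitian_conj psd_cinner by blast
  fix x
  have "cinner x ((adj Y ** X ** Y) *v x) = cinner (Y *v x) (X *v (Y *v x))"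
    by (simp add: cinner_adj matrix_vector_mul_assoc[symmetric])
  then show "0 \<le> Re (cinner x ((adj Y ** X ** Y) *v x))"
    using assms psd_cinner by auto
qed

lemma psd_add: "psd A \<Longrightarrow> psd B \<Longrightarrow> psd (A + B)"
  unfolding psd_cinner hermitian_def
  by (simp add: adj_add matrix_vector_mult_add_rdistrib cinner_add_right)

lemma psd_scaleR: "psd A \<Longrightarrow> 0 \<le> c \<Longrightarrow> psd (c *\<^sub>R A)"
  unfolding psd_cinner hermitian_def
  by (simp add: adj_scaleR scaleR_mv cinner_scaleR_right)

lemma psd_scale_iff: assumes k: "0 < k" shows "psd (k *\<^sub>R X) \<longleftrightarrow> psd X"
  using psd_scaleR[of "k *\<^sub>R X" "1/k"] psd_scaleR[of X k] k by auto

lemma psd_zero_mat[simp]: "psd 0"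
  unfolding psd_cinner hermitian_def by (simp add: adj_def vec_eq_iff)

lemma psd_sum: "finite S \<Longrightarrow> (\<And>b. b \<in> S \<Longrightarrow> psd (M b)) \<Longrightarrow> psd (sum M S)"
  by (induction S rule: finite_induct) (auto intro: psd_add)

lemma psd_one: "psd (mat 1 :: complex^'n^'n)"
  unfolding psd_cinner hermitian_def by (simp add: cinner_self_ge0)

text \<open>A real quadratic 2 t a + t^2 b that is nonnegative for all t has a = 0.  This is the
  variational core of both the eigenvector construction and the kernel lemma below.\<close>
lemma quad_nonneg_imp: fixes a b :: real
  assumes "\<forall>t. 0 \<le> 2 * t * a + t\<^sup>2 * b" shows "a = 0"
proof (rule ccontr)
  assume "a \<noteq> 0"
  define c where "c = \<bar>b\<bar> + 1"
  have c: "c > 0" "b < c" unfolding c_def by auto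
  define t where "t = - a / c"
  have a2: "a\<^sup>2 > 0" using \<open>a \<noteq> 0\<close> by simp
  have "t\<^sup>2 * b = a\<^sup>2 * b / c\<^sup>2" unfolding t_def by (simp add: power_divide)
  also have "\<dots> \<le> a\<^sup>2 * c / c\<^sup>2"
    using c a2 by (intro divide_right_mono mult_left_mono) auto
  also have "\<dots> = a\<^sup>2 / c" using c by (simp add: power2_eq_square)
  finally have "2 * t * a + t\<^sup>2 * b \<le> - (a\<^sup>2 / c)"
    unfolding t_def by (simp add: power2_eq_square)
  also have "\<dots> < 0" using a2 c by simp
  finally show False using assms by (metis not_le)
qed

lemma psd_quad_zero:
  assumes A: "psd A" and q: "Re (cinner y (A *v y)) = 0"
  shows "A *v y = 0"
proof -
  have herm: "hermitian A" using A psd_cinner by blast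
  define z where "z = A *v y"
  define a where "a = Re (cinner z (A *v y))"
  have "0 \<le> 2 * t * a + t\<^sup>2 * Re (cinner z (A *v z))" for t
  proof -
    have "0 \<le> Re (cinner (y + t *\<^sub>R z) (A *v (y + t *\<^sub>R z)))" using A psd_cinner by blast
    moreover have "Re (cinner y (A *v z)) = a"
      unfolding a_def by (rule hermitian_Re_cinner_swap[OF herm])
    ultimately show ?thesis
      by (simp add: matrix_vector_right_distrib mv_scaleR cinner_add_left cinner_add_right
            cinner_scaleR_left cinner_scaleR_right q a_def power2_eq_square algebra_simps)
  qed
  then have "a = 0" by (rule quad_nonneg_imp[OF allI])
  then show ?thesis unfolding z_def a_def using cinner_self_Re_eq0 by auto
qed

lemma Re_sum_zero: assumes "finite S" "\<And>b. b \<in> S \<Longrightarrow> 0 \<le> Re (f b)" "Re (sum f S) = 0" "b \<in> S"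
  shows "Re (f b) = 0"
  using assms sum_nonneg_eq_0_iff[of S "\<lambda>b. Re (f b)"] by (simp add: Re_sum)

subsection \<open>The spectral theorem for hermitian matrices\<close>

text \<open>A unit vector maximizing the Rayleigh quotient of a hermitian A over an A-invariant
  subspace W is an eigenvector: the first-order condition kills the component of A x0
  orthogonal to x0.\<close>
lemma rayleigh_maximizer_eigenvector:
  fixes A :: "complex^'n^'n" and W :: "(complex^'n) set"
  assumes herm: "hermitian A"
    and Wadd: "\<forall>x\<in>W. \<forall>y\<in>W. x + y \<in> W" and Wsc: "\<forall>x\<in>W. \<forall>c. c *s x \<in> W"
    and WA: "\<forall>x\<in>W. A *v x \<in> W"
    and x0W: "x0 \<in> W" and x0n: "cinner x0 x0 = 1"
    and max: "\<And>y. y \<in> W \<Longrightarrow> Re (cinner y (A *v y)) \<le> Re (cinner x0 (A *v x0)) * Re (cinner y y)"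
  shows "A *v x0 = Re (cinner x0 (A *v x0)) *\<^sub>R x0"
proof -
  define \<mu> where "\<mu> = Re (cinner x0 (A *v x0))"
  have WR: "c *\<^sub>R x \<in> W" if "x \<in> W" for c x using Wsc that by (simp add: scaleR_as_smult)
  have Re0: "Re (cinner y (A *v x0)) = 0" if y: "y \<in> W" "cinner x0 y = 0" for y
  proof -
    define a where "a = Re (cinner y (A *v x0))"
    have "0 \<le> 2 * t * (- a) + t\<^sup>2 * (\<mu> * Re (cinner y y) - Re (cinner y (A *v y)))" for t
    proof -
      have yx0: "cinner y x0 = 0" using y(2) cinner_cnj[of x0 y] by simp
      have "Re (cinner x0 (A *v y)) = a"
        unfolding a_def by (rule hermitian_Re_cinner_swap[OF herm])
      then have "Re (cinner (x0 + t *\<^sub>R y) (A *v (x0 + t *\<^sub>R y)))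
          = \<mu> + 2 * t * a + t\<^sup>2 * Re (cinner y (A *v y))"
        unfolding \<mu>_def
        by (simp add: matrix_vector_right_distrib mv_scaleR cinner_add_left cinner_add_right
            cinner_scaleR_left cinner_scaleR_right a_def power2_eq_square algebra_simps)
      moreover have "Re (cinner (x0 + t *\<^sub>R y) (x0 + t *\<^sub>R y)) = 1 + t\<^sup>2 * Re (cinner y y)"
        by (simp add: cinner_add_left cinner_add_right cinner_scaleR_left cinner_scaleR_right
            y(2) yx0 x0n power2_eq_square)
      moreover have "x0 + t *\<^sub>R y \<in> W" using Wadd WR x0W y(1) by auto
      ultimately show ?thesis using max[of "x0 + t *\<^sub>R y"] unfolding \<mu>_def by (simp add: algebra_simps)
    qed
    then have "- a = 0" by (intro quad_nonneg_imp) auto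
    then show ?thesis unfolding a_def by simp
  qed
  have orth: "cinner y (A *v x0) = 0" if y: "y \<in> W" "cinner x0 y = 0" for y
  proof -
    have "\<i> *s y \<in> W" "cinner x0 (\<i> *s y) = 0" using Wsc y by (auto simp: cinner_smult_right)
    then have "Im (cinner y (A *v x0)) = 0" using Re0[of "\<i> *s y"] by (simp add: cinner_smult_left)
    with Re0[OF y] show ?thesis by (simp add: complex_eq_iff)
  qed
  have mu: "cinner x0 (A *v x0) = of_real \<mu>"
    unfolding \<mu>_def using hermitian_quad_real[OF herm, of x0] by (simp add: complex_eq_iff)
  define z where "z = A *v x0 - \<mu> *\<^sub>R x0"
  have zW: "z \<in> W" unfolding z_def using Wadd WR WA x0W
    by (metis add_uminus_conv_diff scaleR_minus_left)
  have "cinner x0 z = 0" unfolding z_def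
    by (simp add: cinner_diff_right cinner_scaleR_right mu x0n)
  then have "cinner z (A *v x0) = 0" "cinner z x0 = 0"
    using orth zW cinner_cnj[of x0 z] by auto
  then have "cinner z z = 0"
    by (simp add: z_def cinner_diff_right cinner_scaleR_right)
  then show ?thesis unfolding z_def \<mu>_def[symmetric] by (simp add: cinner_self_eq0)
qed

text \<open>Every nonzero closed A-invariant subspace contains a unit eigenvector of a hermitian A:
  maximize the quadratic form over the (compact) unit sphere of the subspace.\<close>
lemma eigvec_exists:
  fixes A :: "complex^'n^'n" and W :: "(complex^'n) set"
  assumes herm: "hermitian A"
    and Wadd: "\<forall>x\<in>W. \<forall>y\<in>W. x + y \<in> W" and Wsc: "\<forall>x\<in>W. \<forall>c. c *s x \<in> W"
    and WA: "\<forall>x\<in>W. A *v x \<in> W" and Wcl: "closed W"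
    and ne: "x1 \<in> W" "x1 \<noteq> 0"
  shows "\<exists>x\<in>W. cinner x x = 1 \<and> (\<exists>\<mu>::real. A *v x = \<mu> *\<^sub>R x)"
proof -
  define Q where "Q y = Re (cinner y (A *v y))" for y
  have WR: "c *\<^sub>R x \<in> W" if "x \<in> W" for c x using Wsc that by (simp add: scaleR_as_smult)
  define S where "S = W \<inter> sphere 0 1"
  have "compact S" unfolding S_def
    by (simp add: compact_eq_bounded_closed Wcl bounded_Int closed_Int)
  moreover have "(1 / norm x1) *\<^sub>R x1 \<in> S" using ne WR unfolding S_def by auto
  moreover have "continuous_on S Q" unfolding Q_def by (rule continuous_quad)
  ultimately obtain x0 where x0S: "x0 \<in> S" and x0max: "\<forall>y\<in>S. Q y \<le> Q x0"
    using continuous_attains_sup by (metis empty_iff)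
  have x0W: "x0 \<in> W" using x0S S_def by auto
  have "Re (cinner x0 x0) = 1" using x0S norm_sq_cinner[of x0] unfolding S_def by simp
  then have x0n: "cinner x0 x0 = 1" by (simp add: cinner_self_real)
  have "Q y \<le> Q x0 * Re (cinner y y)" if "y \<in> W" for y
  proof (cases "y = 0")
    case True then show ?thesis by (simp add: Q_def)
  next
    case False
    define s where "s = 1 / norm y"
    have "s *\<^sub>R y \<in> S" unfolding S_def s_def using that WR False by auto
    then have "Q (s *\<^sub>R y) \<le> Q x0" using x0max by blast
    then have "s\<^sup>2 * Q y \<le> Q x0"
      by (simp add: Q_def mv_scaleR cinner_scaleR_left cinner_scaleR_right power2_eq_square)
    then have "(norm y)\<^sup>2 * (s\<^sup>2 * Q y) \<le> (norm y)\<^sup>2 * Q x0" by (simp add: mult_left_mono)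
    moreover have "(norm y)\<^sup>2 * s\<^sup>2 = 1" unfolding s_def using False by (simp add: power_divide)
    ultimately show ?thesis by (simp add: norm_sq_cinner mult.commute mult.left_commute)
  qed
  then have "A *v x0 = Q x0 *\<^sub>R x0"
    unfolding Q_def by (intro rayleigh_maximizer_eigenvector[OF herm Wadd Wsc WA x0W x0n]) auto
  then show ?thesis using x0W x0n by blast
qed

text \<open>An orthonormal family of fewer than CARD('n) vectors has a nonzero vector orthogonal to it
  (otherwise the family would be an orthonormal basis, and counting traces gives a contradiction).\<close>
lemma orthogonal_complement_nonzero:
  fixes v :: "'m \<Rightarrow> complex^'n"
  assumes fin: "finite F" and card: "card F < CARD('n)"
    and orth: "\<forall>i\<in>F. \<forall>j\<in>F. cinner (v i) (v j) = (if i = j then 1 else 0)"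
  shows "\<exists>x::complex^'n. x \<noteq> 0 \<and> (\<forall>j\<in>F. cinner (v j) x = 0)"
proof (rule ccontr)
  assume H: "\<not> ?thesis"
  define w where "w i = axis i 1 - (\<Sum>j\<in>F. cinner (v j) (axis i 1) *s v j)" for i :: 'n
  have w0: "w i = 0" for i
  proof -
    have "cinner (v l) (w i) = 0" if l: "l \<in> F" for l
    proof -
      have "cinner (v l) (w i) = cinner (v l) (axis i 1)
          - (\<Sum>j\<in>F. cinner (v j) (axis i 1) * (if l = j then 1 else 0))"
        unfolding w_def using orth l by (simp add: cinner_diff_right cinner_sum_right cinner_smult_right)
      also have "\<dots> = 0" using l fin by (simp add: if_distrib cong: if_cong)
      finally show ?thesis .
    qed
    then show ?thesis using H by blast
  qed
  have one: "(\<Sum>j\<in>F. cnj (v j $ i) * v j $ i) = 1" for i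
    using arg_cong[OF w0[of i], of "\<lambda>x. x $ i"] unfolding w_def by (simp add: sum_component cinner_axis)
  have "of_nat CARD('n) = (\<Sum>i\<in>(UNIV::'n set). (\<Sum>j\<in>F. cnj (v j $ i) * v j $ i))"
    by (simp add: one)
  also have "\<dots> = (\<Sum>j\<in>F. cinner (v j) (v j))"
    unfolding cinner_def by (rule sum.swap)
  also have "\<dots> = of_nat (card F)" using orth by simp
  finally have "CARD('n) = card F" using of_nat_eq_iff by blast
  then show False using card by simp
qed

text \<open>Orthonormal eigenvectors indexed by any finite subset of the index type, by induction:
  the orthogonal complement of the eigenvectors found so far is A-invariant.\<close>
lemma orthonormal_eigenvectors:
  fixes A :: "complex^'n^'n"
  assumes herm: "hermitian A" and "finite F"
  shows "\<exists>v (l::'n \<Rightarrow> real). (\<forall>i\<in>F. \<forall>j\<in>F. cinner (v i) (v j) = (if i = j then 1 else 0))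
     \<and> (\<forall>i\<in>F. A *v v i = l i *\<^sub>R v i)"
  using \<open>finite F\<close>
proof (induction F rule: finite_induct)
  case empty
  then show ?case by auto
next
  case (insert a F)
  obtain v l where orth: "\<forall>i\<in>F. \<forall>j\<in>F. cinner (v i) (v j) = (if i = j then 1 else 0)"
    and eig: "\<forall>i\<in>F. A *v v i = l i *\<^sub>R v i" using insert.IH by blast
  have "F \<subset> UNIV" using insert by auto
  then have "card F < CARD('n)" by (simp add: psubset_card_mono)
  then obtain x1 where x1: "x1 \<noteq> 0" "\<forall>j\<in>F. cinner (v j) x1 = 0"
    using orthogonal_complement_nonzero[OF insert(1) _ orth] by blast
  define W where "W = {x. \<forall>j\<in>F. cinner (v j) x = 0}"
  have "\<exists>x\<in>W. cinner x x = 1 \<and> (\<exists>\<mu>::real. A *v x = \<mu> *\<^sub>R x)"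
  proof (rule eigvec_exists[OF herm])
    show "\<forall>x\<in>W. \<forall>y\<in>W. x + y \<in> W" unfolding W_def by (simp add: cinner_add_right)
    show "\<forall>x\<in>W. \<forall>c. c *s x \<in> W" unfolding W_def by (simp add: cinner_smult_right)
    show "\<forall>x\<in>W. A *v x \<in> W" unfolding W_def
      using eig by (simp add: hermitian_cinner[OF herm] cinner_scaleR_left)
    have "W = (\<Inter>j\<in>F. {x. cinner (v j) x = 0})" unfolding W_def by auto
    moreover have "closed {x. cinner (v j) x = 0}" for j
      by (intro closed_Collect_eq continuous_cinner_right continuous_on_const)
    ultimately show "closed W" by auto
    show "x1 \<in> W" "x1 \<noteq> 0" using x1 W_def by auto
  qed
  then obtain x \<mu> where xW: "x \<in> W" and xn: "cinner x x = 1" and xe: "A *v x = \<mu> *\<^sub>R x" by blast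
  have xo: "cinner (v j) x = 0" "cinner x (v j) = 0" if "j \<in> F" for j
    using xW that W_def cinner_cnj[of "v j" x] by auto
  show ?case
    using orth eig xo xn xe insert(2)
    by (intro exI[of _ "v(a := x)"] exI[of _ "l(a := \<mu>)"]) auto
qed

lemma diag_mat_mult_right: "(U ** diag_mat d) $ i $ j = U $ i $ j * of_real (d j)"
  unfolding diag_mat_def matrix_matrix_mult_def by (simp add: if_distrib cong: if_cong)

lemma diag_mat_mult_left: "(diag_mat d ** U) $ i $ j = of_real (d i) * U $ i $ j"
proof -
  have "\<And>k. (if i = k then complex_of_real (d i) else 0) * U $ k $ j
      = (if i = k then complex_of_real (d i) * U $ k $ j else 0)" by simp
  then have "(diag_mat d ** U) $ i $ j = (\<Sum>k\<in>UNIV. if i = k then complex_of_real (d i) * U $ k $ j else 0)"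
    unfolding diag_mat_def matrix_matrix_mult_def by (simp only: vec_lambda_beta if_distrib[symmetric])
  then show ?thesis by simp
qed

theorem spectral_theorem:
  fixes A :: "complex^'n^'n"
  assumes herm: "hermitian A"
  shows "\<exists>U d. unitary U \<and> A = U ** diag_mat d ** adj U"
proof -
  obtain v :: "'n \<Rightarrow> complex^'n" and l :: "'n \<Rightarrow> real"
    where orth: "\<forall>i j. cinner (v i) (v j) = (if i = j then 1 else 0)" and eig: "\<forall>i. A *v v i = l i *\<^sub>R v i"
    using orthonormal_eigenvectors[OF herm, of UNIV] by auto
  define U :: "complex^'n^'n" where "U = (\<chi> i j. v j $ i)"
  have UU: "adj U ** U = mat 1"
    using orth unfolding U_def adj_def matrix_matrix_mult_def mat_def cinner_def
    by (simp add: vec_eq_iff)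
  then have U: "unitary U" unfolding unitary_def using matrix_left_right_inverse by blast
  have "(A ** U) $ i $ j = (A *v v j) $ i" for i j
    unfolding U_def matrix_matrix_mult_def matrix_vector_mult_def by simp
  then have "A ** U = U ** diag_mat l" using eig
    by (simp add: vec_eq_iff diag_mat_mult_right U_def) (simp add: scaleR_conv_of_real mult.commute)
  then have "A = U ** diag_mat l ** adj U"
    using U unfolding unitary_def by (metis matrix_mul_assoc matrix_mul_rid)
  then show ?thesis using U by blast
qed

subsection \<open>Functional calculus\<close>

definition spec_mat :: "complex^'n^'n \<Rightarrow> ('n \<Rightarrow> real) \<Rightarrow> complex^'n^'n" where
  "spec_mat U d = U ** diag_mat d ** adj U"

lemma mat_fun_spec:
  assumes "hermitian (A :: complex^'n^'n)"
  shows "\<exists>U d. unitary U \<and> A = spec_mat U d \<and> mat_fun f A = spec_mat U (f \<circ> d)"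
proof -
  have "\<exists>X U d. unitary U \<and> A = U ** diag_mat d ** adj U \<and> X = U ** diag_mat (f \<circ> d) ** adj U"
    using spectral_theorem[OF assms] by blast
  from someI_ex[OF this] show ?thesis unfolding mat_fun_def spec_mat_def by blast
qed

lemma diag_mat_mult: "diag_mat a ** diag_mat b = diag_mat (\<lambda>i. a i * b i)"
  by (simp add: vec_eq_iff diag_mat_mult_left) (simp add: diag_mat_def)

lemma adj_diag: "adj (diag_mat a) = diag_mat a"
  by (simp add: vec_eq_iff diag_mat_def adj_def)

lemma unitaryD: "unitary U \<Longrightarrow> U ** adj U = mat 1" "unitary U \<Longrightarrow> adj U ** U = mat 1"
  by (simp_all add: unitary_def)

lemma unitary_cancel: assumes "unitary U"
  shows "X ** U ** adj U = X" "X ** adj U ** U = X"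
  using assms unfolding unitary_def by (metis matrix_mul_assoc matrix_mul_rid)+

lemma spec_mat_mult: assumes "unitary U"
  shows "spec_mat U a ** spec_mat U b = spec_mat U (\<lambda>i. a i * b i)"
proof -
  have "spec_mat U a ** spec_mat U b = U ** diag_mat a ** (adj U ** U) ** diag_mat b ** adj U"
    unfolding spec_mat_def by (simp add: matrix_mul_assoc)
  also have "\<dots> = U ** (diag_mat a ** diag_mat b) ** adj U"
    using assms by (simp add: unitary_def matrix_mul_assoc)
  finally show ?thesis by (simp add: diag_mat_mult spec_mat_def)
qed

lemma spec_mat_adj: "adj (spec_mat U a) = spec_mat U a"
  unfolding spec_mat_def by (simp add: adj_mult adj_diag matrix_mul_assoc)

lemma spec_mat_add: "spec_mat U a + spec_mat U b = spec_mat U (\<lambda>i. a i + b i)"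
proof -
  have "diag_mat a + diag_mat b = diag_mat (\<lambda>i. a i + b i)" by (simp add: vec_eq_iff diag_mat_def)
  then show ?thesis unfolding spec_mat_def by (metis matrix_add_ldistrib matrix_add_left)
qed

lemma diag_mat_one: "diag_mat (\<lambda>i. 1) = mat 1"
  by (simp add: vec_eq_iff diag_mat_def mat_def)

lemma spec_mat_one: "unitary U \<Longrightarrow> spec_mat U (\<lambda>i. 1) = mat 1"
  unfolding spec_mat_def diag_mat_one using unitaryD by simp

lemma spec_mat_psd_nonneg: assumes "unitary U" "psd (spec_mat U d)" shows "0 \<le> d i"
proof -
  have "adj U ** spec_mat U d ** U = diag_mat d"
    using assms(1) unfolding spec_mat_def by (simp add: matrix_mul_assoc unitary_cancel unitary_def)
  then have "psd (diag_mat d)" using psd_conj[OF assms(2), of U] by simp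
  then have "0 \<le> Re (cinner (axis i 1) (diag_mat d *v axis i 1))" unfolding psd_cinner by blast
  moreover have "(diag_mat d *v axis i 1) $ i = of_real (d i)"
    by (simp add: mv_axis diag_mat_def)
  ultimately show ?thesis by (simp add: cinner_axis_left)
qed

text \<open>Whatever commutes with a hermitian matrix commutes with every function of it: in the
  eigenbasis a commuting matrix has no entries linking distinct eigenvalues.\<close>
lemma spec_mat_comm:
  assumes U: "unitary U" and BK: "B ** spec_mat U d = spec_mat U d ** B"
  shows "B ** spec_mat U (\<lambda>i. f (d i)) = spec_mat U (\<lambda>i. f (d i)) ** B"
proof -
  define C where "C = adj U ** B ** U"
  have B: "B = U ** C ** adj U"
    unfolding C_def using U by (simp add: unitary_def matrix_mul_assoc unitary_cancel[OF U])
  have "adj U ** (B ** spec_mat U d) ** U = adj U ** (spec_mat U d ** B) ** U" using BK by simp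
  then have "adj U ** B ** U ** diag_mat d ** adj U ** U = diag_mat d ** adj U ** B ** U"
    unfolding spec_mat_def using unitaryD[OF U] by (simp add: matrix_mul_assoc unitary_cancel[OF U])
  then have CD: "C ** diag_mat d = diag_mat d ** C"
    unfolding C_def unitary_cancel(2)[OF U] by (simp add: matrix_mul_assoc)
  have e: "C $ i $ j * of_real (d j) = of_real (d i) * C $ i $ j" for i j
    using arg_cong[OF CD, of "\<lambda>X. X $ i $ j"] by (simp add: diag_mat_mult_right diag_mat_mult_left)
  have "C $ i $ j * of_real (f (d j)) = of_real (f (d i)) * C $ i $ j" for i j
  proof (cases "d i = d j")
    case False
    then have "C $ i $ j = 0" using e[of i j]
      by (metis mult.commute mult_cancel_left of_real_eq_iff)
    then show ?thesis by simp
  qed (simp add: mult.commute)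
  then have "C ** diag_mat (\<lambda>i. f (d i)) = diag_mat (\<lambda>i. f (d i)) ** C"
    by (simp add: vec_eq_iff diag_mat_mult_right diag_mat_mult_left)
  then have "U ** (C ** diag_mat (\<lambda>i. f (d i))) ** adj U = U ** (diag_mat (\<lambda>i. f (d i)) ** C) ** adj U"
    by simp
  then show ?thesis unfolding B spec_mat_def
    by (simp add: matrix_mul_assoc unitaryD[OF U] unitary_cancel[OF U])
qed

definition pinv_sqrt :: "real \<Rightarrow> real" where
  "pinv_sqrt t = (if t > 0 then 1 / sqrt t else 0)"

lemma gen_inv_sqrt_spec:
  assumes "psd K"
  obtains U d where "unitary U" "K = spec_mat U d" "\<And>i. 0 \<le> d i"
    "gen_inv_sqrt K = spec_mat U (\<lambda>i. pinv_sqrt (d i))"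
proof -
  obtain U d where "unitary U" "K = spec_mat U d" "gen_inv_sqrt K = spec_mat U (pinv_sqrt \<circ> d)"
    using mat_fun_spec[of K pinv_sqrt] assms
    unfolding psd_cinner gen_inv_sqrt_def pinv_sqrt_def[abs_def] by blast
  moreover have "0 \<le> d i" for i using spec_mat_psd_nonneg calculation assms by metis
  ultimately show ?thesis using that by (simp add: comp_def)
qed

subsection \<open>Tensor products and the partial trace\<close>

lemma sum_UNIV_pair: "(\<Sum>p\<in>(UNIV::('a::finite \<times> 'b::finite) set). f p) = (\<Sum>a\<in>UNIV. \<Sum>b\<in>UNIV. f (a, b))"
proof -
  have "(\<Sum>a\<in>UNIV. \<Sum>b\<in>UNIV. f (a, b)) = (\<Sum>p\<in>(UNIV::'a set) \<times> (UNIV::'b set). f p)"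
    by (simp add: sum.cartesian_product)
  then show ?thesis by simp
qed

lemma kron_mult: "kron A B ** kron C D = kron (A ** C) (B ** D)"
proof -
  have "(kron A B ** kron C D) $ p $ q = (kron (A ** C) (B ** D)) $ p $ q" for p q
  proof -
    have "(kron A B ** kron C D) $ p $ q
        = (\<Sum>a\<in>UNIV. \<Sum>b\<in>UNIV. (A $ fst p $ a * C $ a $ fst q) * (B $ snd p $ b * D $ b $ snd q))"
      unfolding matrix_matrix_mult_def kron_def sum_UNIV_pair vec_lambda_beta fst_conv snd_conv
      by (simp only: mult_ac)
    also have "\<dots> = (kron (A ** C) (B ** D)) $ p $ q"
      unfolding kron_def matrix_matrix_mult_def vec_lambda_beta by (simp only: sum_product)
    finally show ?thesis .
  qed
  then show ?thesis by (simp add: vec_eq_iff)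
qed

lemma kron_zero_left: "kron 0 B = 0"
  by (simp add: vec_eq_iff kron_def)

text \<open>The block maps E_b : H_AB -> H_A and F_a : H_AB -> H_B extracting the components
  with second (resp. first) index fixed.\<close>
definition slice_B :: "'b \<Rightarrow> complex^('a::finite \<times> 'b::finite)^'a" where
  "slice_B b = (\<chi> a p. if fst p = a \<and> snd p = b then 1 else 0)"

definition slice_A :: "'a \<Rightarrow> complex^('a::finite \<times> 'b::finite)^'b" where
  "slice_A a = (\<chi> b p. if fst p = a \<and> snd p = b then 1 else 0)"

lemma adj_slice_B_mult: "(adj (slice_B b) ** X) $ p $ c = (if snd p = b then X $ fst p $ c else 0)"
  unfolding matrix_matrix_mult_def adj_def slice_B_def
  by (simp only: vec_lambda_beta) (rule sum_if_eq[where c="fst p"], auto)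

lemma mult_slice_B: "(Y ** slice_B b) $ r $ q = (if snd q = b then Y $ r $ fst q else 0)"
  unfolding matrix_matrix_mult_def slice_B_def
  by (simp only: vec_lambda_beta) (rule sum_if_eq[where c="fst q"], auto)

lemma slice_B_mult: "(slice_B b ** Z) $ a $ c = Z $ (a, b) $ c"
  unfolding matrix_matrix_mult_def slice_B_def
  by (simp, rule sum_if_eq[where c="(a,b)"], auto)

lemma mult_adj_slice_B: "(Z ** adj (slice_B b)) $ r $ a = Z $ r $ (a, b)"
  unfolding matrix_matrix_mult_def adj_def slice_B_def
  by (simp, rule sum_if_eq[where c="(a,b)"], auto)

lemma adj_slice_A_mult: "(adj (slice_A a) ** X) $ p $ c = (if fst p = a then X $ snd p $ c else 0)"
  unfolding matrix_matrix_mult_def adj_def slice_A_def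
  by (simp only: vec_lambda_beta) (rule sum_if_eq[where c="snd p"], auto)

lemma mult_slice_A: "(Y ** slice_A a) $ r $ q = (if fst q = a then Y $ r $ snd q else 0)"
  unfolding matrix_matrix_mult_def slice_A_def
  by (simp only: vec_lambda_beta) (rule sum_if_eq[where c="snd q"], auto)

text \<open>Block decompositions: A (x) 1 = sum_b E_b* A E_b, 1 (x) B = sum_a F_a* B F_a and
  tr_B rho = sum_b E_b rho E_b*.  Positivity of all three operations follows.\<close>
lemma kron_one_right_sum: "kron A (mat 1) = (\<Sum>b\<in>UNIV. adj (slice_B b) ** A ** slice_B b)"
proof -
  have entry: "(\<Sum>b\<in>UNIV. (adj (slice_B b) ** A ** slice_B b) $ p $ q) = kron A (mat 1) $ p $ q" for p q
    by (rule sum_if_eq[where c="snd q"]) (auto simp: mult_slice_B adj_slice_B_mult kron_def mat_def)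
  then show ?thesis
    unfolding vec_eq_iff mat_sum_nth by (intro allI) (rule sym, rule entry)
qed

lemma kron_one_left_sum: "kron (mat 1) B = (\<Sum>a\<in>UNIV. adj (slice_A a) ** B ** slice_A a)"
proof -
  have entry: "(\<Sum>a\<in>UNIV. (adj (slice_A a) ** B ** slice_A a) $ p $ q) = kron (mat 1) B $ p $ q" for p q
    by (rule sum_if_eq[where c="fst q"]) (auto simp: mult_slice_A adj_slice_A_mult kron_def mat_def)
  then show ?thesis
    unfolding vec_eq_iff mat_sum_nth by (intro allI) (rule sym, rule entry)
qed

lemma ptrace_sum: "ptrace_B \<rho> = (\<Sum>b\<in>UNIV. slice_B b ** \<rho> ** adj (slice_B b))"
  by (simp add: vec_eq_iff mat_sum_nth ptrace_B_def mult_adj_slice_B slice_B_mult)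

lemma psd_ptrace: "psd \<rho> \<Longrightarrow> psd (ptrace_B \<rho>)"
  unfolding ptrace_sum by (rule psd_sum) (auto dest: psd_conj[where Y="adj (slice_B _)"])

lemma psd_kron_one_right: "psd A \<Longrightarrow> psd (kron A (mat 1))"
  unfolding kron_one_right_sum by (rule psd_sum) (auto intro: psd_conj)

lemma psd_kron_one_left: "psd B \<Longrightarrow> psd (kron (mat 1) B)"
  unfolding kron_one_left_sum by (rule psd_sum) (auto intro: psd_conj)

lemma sum_slice_B: "(\<Sum>b\<in>UNIV. adj (slice_B b :: complex^('a::finite \<times> 'b::finite)^'a) ** slice_B b) = mat 1"
proof -
  have "kron (mat 1 :: complex^'a^'a) (mat 1 :: complex^'b^'b) = mat 1"
    by (simp add: vec_eq_iff kron_def mat_def prod_eq_iff)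
  then show ?thesis using kron_one_right_sum[of "mat 1 :: complex^'a^'a", where 'b='b] by simp
qed

lemma quad_sum_conj:
  "cinner x ((\<Sum>b\<in>S. adj (Y b) ** A ** Y b) *v x) = (\<Sum>b\<in>S. cinner (Y b *v x) (A *v (Y b *v x)))"
  by (simp add: mat_sum_mv cinner_sum_right cinner_adj matrix_vector_mul_assoc[symmetric])

lemma psd_sum_conj_kernel:
  fixes Y :: "'c::finite \<Rightarrow> complex^'n^'m"
  assumes A: "psd A" and q: "Re (cinner v ((\<Sum>c\<in>UNIV. adj (Y c) ** A ** Y c) *v v)) = 0"
  shows "A *v (Y b *v v) = 0"
proof (rule psd_quad_zero[OF A])
  show "Re (cinner (Y b *v v) (A *v (Y b *v v))) = 0"
    using q A unfolding quad_sum_conj psd_cinner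
    by (intro Re_sum_zero[where S=UNIV and f="\<lambda>c. cinner (Y c *v v) (A *v (Y c *v v))"]) auto
qed

text \<open>Fact (i): ker(rho_A (x) 1) is contained in ker rho for psd rho.  If (rho_A (x) 1) x = 0
  then rho_A kills every block E_b x, hence rho kills every E_b* E_b x, and these sum to x.\<close>
lemma ptrace_kernel:
  fixes \<rho> :: "complex^('a::finite \<times> 'b::finite)^('a \<times> 'b)"
  assumes psd: "psd \<rho>" and K: "kron (ptrace_B \<rho>) (mat 1) *v x = 0"
  shows "\<rho> *v x = 0"
proof -
  have blocks: "ptrace_B \<rho> *v (slice_B b *v x) = 0" for b
    using K psd_sum_conj_kernel[OF psd_ptrace[OF psd], where Y=slice_B and v=x and b=b]
    by (simp add: kron_one_right_sum[symmetric])
  have zero: "\<rho> *v (adj (slice_B b) *v (slice_B b *v x)) = 0" for b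
  proof -
    have "Re (cinner (slice_B b *v x)
        ((\<Sum>c\<in>UNIV. adj (adj (slice_B c)) ** \<rho> ** adj (slice_B c)) *v (slice_B b *v x))) = 0"
      using blocks[of b] by (simp only: adj_adj ptrace_sum[symmetric]) simp
    from psd_sum_conj_kernel[OF psd this] show ?thesis .
  qed
  have resolution: "(\<Sum>b\<in>UNIV. adj (slice_B b) *v (slice_B b *v x)) = x"
    by (simp add: mat_sum_mv[symmetric] matrix_vector_mul_assoc sum_slice_B)
  have "\<rho> *v x = \<rho> *v (\<Sum>b\<in>UNIV. adj (slice_B b) *v (slice_B b *v x))"
    by (simp only: resolution)
  also have "\<dots> = (\<Sum>b\<in>UNIV. \<rho> *v (adj (slice_B b) *v (slice_B b *v x)))" by (rule mv_sum)
  also have "\<dots> = 0" by (simp only: zero sum.neutral_const)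
  finally show ?thesis .
qed

subsection \<open>Conjugation by the generalized inverse square root\<close>

lemma spec_mat_cong: "(\<And>i. a i = b i) \<Longrightarrow> spec_mat U a = spec_mat U b"
  by (metis ext)

text \<open>Indicator of the support: spec_mat U (supp_ind o d) is the projection onto the range of
  spec_mat U d (for d \<ge> 0).\<close>
definition supp_ind :: "real \<Rightarrow> real" where
  "supp_ind t = (if t > 0 then 1 else 0)"

lemma diag_mat_axis: "diag_mat d *v axis i 1 = axis i (complex_of_real (d i))"
  by (simp add: vec_eq_iff mv_axis) (simp add: diag_mat_def axis_def)

lemma support_projection:
  fixes \<rho> :: "complex^'n^'n"
  assumes U: "unitary U" and d0: "\<And>i. 0 \<le> d i" and herm: "hermitian \<rho>"
    and supp: "\<And>x. spec_mat U d *v x = 0 \<Longrightarrow> \<rho> *v x = 0"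
  shows "spec_mat U (\<lambda>i. supp_ind (d i)) ** \<rho> ** spec_mat U (\<lambda>i. supp_ind (d i)) = \<rho>"
proof -
  define P where "P = spec_mat U (\<lambda>i. supp_ind (d i))"
  define Q where "Q = spec_mat U (\<lambda>i. 1 - supp_ind (d i))"
  have PQ: "P + Q = mat 1"
    unfolding P_def Q_def spec_mat_add spec_mat_one[OF U, symmetric] by (rule spec_mat_cong) simp
  have kernel_col: "\<rho> *v (U *v axis i 1) = 0" if "\<not> d i > 0" for i
  proof (rule supp)
    have "d i = 0" using that d0[of i] by simp
    moreover have "axis i (0::complex) = 0" by (simp add: axis_def vec_eq_iff)
    ultimately have "U *v (diag_mat d *v axis i 1) = 0"
      by (simp only: diag_mat_axis of_real_0 matrix_vector_mult_0_right)
    then show "spec_mat U d *v (U *v axis i 1) = 0"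
      unfolding spec_mat_def by (simp add: matrix_vector_mul_assoc unitary_cancel[OF U])
  qed
  have "(\<rho> ** U ** diag_mat (\<lambda>i. 1 - supp_ind (d i))) $ a $ i = 0" for a i
  proof (cases "d i > 0")
    case False
    then have "(\<rho> ** U) $ a $ i = 0"
      using kernel_col[OF False] by (metis matrix_vector_mul_assoc mv_axis zero_index)
    then show ?thesis by (simp add: diag_mat_mult_right)
  qed (simp add: diag_mat_mult_right supp_ind_def)
  then have "\<rho> ** U ** diag_mat (\<lambda>i. 1 - supp_ind (d i)) = 0" by (simp add: vec_eq_iff)
  then have "\<rho> ** Q = 0"
    unfolding Q_def spec_mat_def by (simp add: matrix_mul_assoc)
  then have rP: "\<rho> ** P = \<rho>"
    using PQ by (metis add.right_neutral matrix_add_ldistrib matrix_mul_rid)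
  moreover have "P ** \<rho> = \<rho>"
    using arg_cong[OF rP, of adj] herm unfolding P_def hermitian_def by (simp add: adj_mult spec_mat_adj)
  ultimately show ?thesis unfolding P_def by simp
qed

text \<open>First half of fact (ii): if \<rho> \<le> c K T then M \<rho> M \<le> c T, where M = K^(-1/2).  Conjugating
  by M gives M \<rho> M \<le> c P T; the complementary part c Q T is psd since T commutes with Q.\<close>
lemma loewner_conj_forward:
  assumes U: "unitary U" and d0: "\<And>i. 0 \<le> d i"
    and T: "psd T" and TK: "T ** spec_mat U d = spec_mat U d ** T" and c: "0 \<le> c"
    and le: "psd (c *\<^sub>R (spec_mat U d ** T) - \<rho>)"
  shows "psd (c *\<^sub>R T - spec_mat U (\<lambda>i. pinv_sqrt (d i)) ** \<rho> ** spec_mat U (\<lambda>i. pinv_sqrt (d i)))"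
proof -
  define M where "M = spec_mat U (\<lambda>i. pinv_sqrt (d i))"
  define P where "P = spec_mat U (\<lambda>i. supp_ind (d i))"
  define Q where "Q = spec_mat U (\<lambda>i. 1 - supp_ind (d i))"
  have MKM: "M ** spec_mat U d ** M = P"
    unfolding M_def P_def spec_mat_mult[OF U]
    by (rule spec_mat_cong) (use d0 in \<open>auto simp: pinv_sqrt_def supp_ind_def field_simps\<close>)
  have PQ: "P + Q = mat 1"
    unfolding P_def Q_def spec_mat_add spec_mat_one[OF U, symmetric] by (rule spec_mat_cong) simp
  have QQ: "Q ** Q = Q" unfolding Q_def spec_mat_mult[OF U]
    by (rule spec_mat_cong) (simp add: supp_ind_def)
  have TM: "T ** M = M ** T" and TQ: "T ** Q = Q ** T"
    unfolding M_def Q_def by (rule spec_mat_comm[OF U TK])+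
  have "M ** spec_mat U d ** T ** M = M ** spec_mat U d ** M ** T" by (simp only: matrix_mul_assoc[symmetric] TM)
  then have "M ** (c *\<^sub>R (spec_mat U d ** T) - \<rho>) ** M = c *\<^sub>R (M ** spec_mat U d ** M ** T) - M ** \<rho> ** M"
    by (simp add: matrix_diff_left matrix_diff_right matrix_scaleR_left matrix_scaleR_right
        matrix_mul_assoc)
  then have PT: "psd (c *\<^sub>R (P ** T) - M ** \<rho> ** M)"
    using psd_conj[OF le, of M] unfolding MKM by (simp add: M_def spec_mat_adj)
  have "Q ** T ** Q = Q ** T"
    by (simp only: matrix_mul_assoc[symmetric] TQ) (simp only: matrix_mul_assoc QQ)
  then have "adj Q ** T ** Q = Q ** T" by (simp add: Q_def spec_mat_adj)
  then have QT: "psd (c *\<^sub>R (Q ** T))" using psd_conj[OF T, of Q] psd_scaleR c by metis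
  have "c *\<^sub>R (P ** T) - M ** \<rho> ** M + c *\<^sub>R (Q ** T) = c *\<^sub>R ((P + Q) ** T) - M ** \<rho> ** M"
    by (simp add: matrix_add_left scaleR_right_distrib algebra_simps)
  also have "\<dots> = c *\<^sub>R T - M ** \<rho> ** M" using PQ by simp
  finally have "psd (c *\<^sub>R T - M ** \<rho> ** M)" using psd_add[OF PT QT] by (simp only:)
  then show ?thesis unfolding M_def .
qed

text \<open>Second half of fact (ii): if M \<rho> M \<le> c T then \<rho> \<le> c K T.  Conjugate by S = K^(1/2): the
  identities S M = M S = P, S S = K and P \<rho> P = \<rho> recover \<rho> and c K T.\<close>
lemma loewner_conj_backward:
  assumes U: "unitary U" and d0: "\<And>i. 0 \<le> d i"
    and TK: "T ** spec_mat U d = spec_mat U d ** T"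
    and supp: "spec_mat U (\<lambda>i. supp_ind (d i)) ** \<rho> ** spec_mat U (\<lambda>i. supp_ind (d i)) = \<rho>"
    and le: "psd (c *\<^sub>R T - spec_mat U (\<lambda>i. pinv_sqrt (d i)) ** \<rho> ** spec_mat U (\<lambda>i. pinv_sqrt (d i)))"
  shows "psd (c *\<^sub>R (spec_mat U d ** T) - \<rho>)"
proof -
  define M where "M = spec_mat U (\<lambda>i. pinv_sqrt (d i))"
  define P where "P = spec_mat U (\<lambda>i. supp_ind (d i))"
  define S where "S = spec_mat U (\<lambda>i. sqrt (d i))"
  have SM: "S ** M = P" and MS: "M ** S = P" unfolding S_def M_def P_def spec_mat_mult[OF U]
    by (rule spec_mat_cong, simp add: pinv_sqrt_def supp_ind_def)+
  have SS: "S ** S = spec_mat U d" unfolding S_def spec_mat_mult[OF U]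
    by (rule spec_mat_cong) (use d0 in auto)
  have TS: "T ** S = S ** T" unfolding S_def by (rule spec_mat_comm[OF U TK])
  have "S ** T ** S = S ** S ** T" by (simp only: matrix_mul_assoc[symmetric] TS)
  then have "S ** (c *\<^sub>R T - M ** \<rho> ** M) ** S = c *\<^sub>R (S ** S ** T) - (S ** M) ** \<rho> ** (M ** S)"
    by (simp add: matrix_diff_left matrix_diff_right matrix_scaleR_left matrix_scaleR_right
        matrix_mul_assoc)
  also have "\<dots> = c *\<^sub>R (spec_mat U d ** T) - \<rho>"
    using supp unfolding SS SM MS P_def by simp
  finally show ?thesis
    using psd_conj[OF le, of S] by (simp add: M_def S_def spec_mat_adj)
qed

lemma loewner_conj_gen_inv_sqrt:
  fixes K T \<rho> :: "complex^'n^'n"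
  assumes K: "psd K" and herm: "hermitian \<rho>" and supp: "\<And>x. K *v x = 0 \<Longrightarrow> \<rho> *v x = 0"
    and T: "psd T" and TK: "T ** K = K ** T" and c: "0 \<le> c"
  shows "loewner_le \<rho> (c *\<^sub>R (K ** T)) \<longleftrightarrow>
         loewner_le (gen_inv_sqrt K ** \<rho> ** gen_inv_sqrt K) (c *\<^sub>R T)"
proof -
  obtain U d where U: "unitary U" and Kd: "K = spec_mat U d" and d0: "\<And>i. 0 \<le> d i"
    and M: "gen_inv_sqrt K = spec_mat U (\<lambda>i. pinv_sqrt (d i))"
    using gen_inv_sqrt_spec[OF K] by blast
  have TK': "T ** spec_mat U d = spec_mat U d ** T" using TK Kd by simp
  have "\<And>x. spec_mat U d *v x = 0 \<Longrightarrow> \<rho> *v x = 0" using supp Kd by simp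
  from support_projection[where d=d, OF U d0 herm this]
  have P: "spec_mat U (\<lambda>i. supp_ind (d i)) ** \<rho> ** spec_mat U (\<lambda>i. supp_ind (d i)) = \<rho>" .
  show ?thesis unfolding loewner_le_def M unfolding Kd
  proof
    assume "psd (c *\<^sub>R (spec_mat U d ** T) - \<rho>)"
    from loewner_conj_forward[where d=d, OF U d0 T TK' c this]
    show "psd (c *\<^sub>R T - spec_mat U (\<lambda>i. pinv_sqrt (d i)) ** \<rho> ** spec_mat U (\<lambda>i. pinv_sqrt (d i)))" .
  next
    assume "psd (c *\<^sub>R T - spec_mat U (\<lambda>i. pinv_sqrt (d i)) ** \<rho> ** spec_mat U (\<lambda>i. pinv_sqrt (d i)))"
    from loewner_conj_backward[where d=d, OF U d0 TK' P this]
    show "psd (c *\<^sub>R (spec_mat U d ** T) - \<rho>)" .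
  qed
qed

subsection \<open>Shifting the max-relative entropy\<close>

lemma Inf_shift: "Inf ((\<lambda>x. x + ereal c) ` A) = Inf A + ereal c"
proof (rule antisym)
  show "Inf A + ereal c \<le> Inf ((\<lambda>x. x + ereal c) ` A)"
    by (rule Inf_greatest) (auto intro: add_right_mono Inf_lower)
  have "Inf ((\<lambda>x. x + ereal c) ` A) - ereal c \<le> Inf A"
  proof (rule Inf_greatest)
    fix y assume "y \<in> A"
    then have "Inf ((\<lambda>x. x + ereal c) ` A) \<le> y + ereal c" by (auto intro: Inf_lower)
    then show "Inf ((\<lambda>x. x + ereal c) ` A) - ereal c \<le> y"
      by (simp add: ereal_minus_le_iff)
  qed
  then show "Inf ((\<lambda>x. x + ereal c) ` A) \<le> Inf A + ereal c"
    by (simp add: ereal_minus_le_iff)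
qed

lemma Dmax_shift:
  assumes "\<And>l. loewner_le X (2 powr l *\<^sub>R Y) \<longleftrightarrow> loewner_le X' (2 powr (l + L) *\<^sub>R Y')"
  shows "Dmax X Y = Dmax X' Y' + ereal (- L)"
proof -
  have "{ereal l | l. loewner_le X (2 powr l *\<^sub>R Y)}
      = (\<lambda>x. x + ereal (- L)) ` {ereal m | m. loewner_le X' (2 powr m *\<^sub>R Y')}"
  proof (rule set_eqI, rule iffI)
    fix x assume "x \<in> {ereal l | l. loewner_le X (2 powr l *\<^sub>R Y)}"
    then obtain l where "x = ereal (l + L) + ereal (- L)" "loewner_le X' (2 powr (l + L) *\<^sub>R Y')"
      using assms by auto
    then show "x \<in> (\<lambda>x. x + ereal (- L)) ` {ereal m | m. loewner_le X' (2 powr m *\<^sub>R Y')}" by blast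
  next
    fix x assume "x \<in> (\<lambda>x. x + ereal (- L)) ` {ereal m | m. loewner_le X' (2 powr m *\<^sub>R Y')}"
    then obtain m where "x = ereal (m - L)" "loewner_le X' (2 powr m *\<^sub>R Y')" by auto
    then show "x \<in> {ereal l | l. loewner_le X (2 powr l *\<^sub>R Y)}" using assms[of "m - L"] by auto
  qed
  then show ?thesis unfolding Dmax_def by (simp add: Inf_shift)
qed

lemma Dmax_zero: assumes "psd X" shows "Dmax 0 X = -\<infinity>"
proof -
  have "{ereal l | l. loewner_le 0 ((2 powr l) *\<^sub>R X)} = {ereal l | l. True}"
    unfolding loewner_le_def using psd_scaleR[OF assms] by auto
  moreover have "Inf {ereal l | l::real. True} = -\<infinity>"
    by (rule ereal_bot) (auto intro: Inf_lower)
  ultimately show ?thesis unfolding Dmax_def by simp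
qed

lemma Inf_attains_MInfty: "P x \<Longrightarrow> f x = -\<infinity> \<Longrightarrow> Inf {f y | y. P y} = (-\<infinity> :: ereal)"
  by (intro Inf_eq_MInfty) (metis (mono_tags, lifting) mem_Collect_eq)

lemma psd_diag: assumes "\<And>i. 0 \<le> d i" shows "psd (diag_mat d)"
proof -
  have "diag_mat d = adj (diag_mat (\<lambda>i. sqrt (d i))) ** mat 1 ** diag_mat (\<lambda>i. sqrt (d i))"
    using assms by (simp add: adj_diag diag_mat_mult)
  then show ?thesis using psd_conj[OF psd_one] by metis
qed

lemma normalized_state_exists: "\<exists>\<sigma>::complex^'b::finite^'b. normalized_state \<sigma>"
proof -
  define \<sigma> :: "complex^'b^'b" where "\<sigma> = diag_mat (\<lambda>i. if i = undefined then 1 else 0)"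
  have "psd \<sigma>" unfolding \<sigma>_def by (rule psd_diag) auto
  moreover have "trace \<sigma> = 1"
    unfolding trace_def \<sigma>_def diag_mat_def by (simp, rule sum_if_eq[where c=undefined], auto)
  ultimately show ?thesis unfolding normalized_state_def by blast
qed

lemma cond_B_given_A_eq:
  "cond_B_given_A \<rho> = (1 / real (rank (ptrace_B \<rho>))) *\<^sub>R
     (gen_inv_sqrt (kron (ptrace_B \<rho>) (mat 1)) ** \<rho> ** gen_inv_sqrt (kron (ptrace_B \<rho>) (mat 1)))"
  unfolding cond_B_given_A_def Let_def by (simp add: matrix_scaleR_left matrix_scaleR_right)

text \<open>For every psd \<sigma>, D_max(\<rho>_B|A || 1 (x) \<sigma>) = D_max(\<rho> || \<rho>_A (x) \<sigma>) - log rank \<rho>_A: apply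
  fact (ii) with K = \<rho>_A (x) 1 and T = 1 (x) \<sigma>, which commute and have product K T = \<rho>_A (x) \<sigma>.\<close>
lemma Dmax_cond_B_given_A:
  fixes \<rho> :: "complex^('a::finite \<times> 'b::finite)^('a \<times> 'b)" and \<sigma> :: "complex^'b^'b"
  assumes \<rho>: "psd \<rho>" and r0: "rank (ptrace_B \<rho>) \<noteq> 0" and \<sigma>: "psd \<sigma>"
  shows "Dmax (cond_B_given_A \<rho>) (kron (mat 1) \<sigma>)
       = Dmax \<rho> (kron (ptrace_B \<rho>) \<sigma>) + ereal (- log 2 (real (rank (ptrace_B \<rho>))))"
proof (rule Dmax_shift)
  define r where "r = real (rank (ptrace_B \<rho>))"
  define K where "K = kron (ptrace_B \<rho>) (mat 1 :: complex^'b^'b)"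
  define M where "M = gen_inv_sqrt K"
  define T where "T = kron (mat 1 :: complex^'a^'a) \<sigma>"
  have r: "0 < r" "2 powr (log 2 r) = r" using r0 unfolding r_def by simp_all
  have KT: "K ** T = kron (ptrace_B \<rho>) \<sigma>" and TK: "T ** K = K ** T"
    unfolding K_def T_def by (simp_all add: kron_mult)
  fix l
  have "loewner_le (cond_B_given_A \<rho>) (2 powr l *\<^sub>R T)
      \<longleftrightarrow> psd ((1 / r) *\<^sub>R (2 powr (l + log 2 r) *\<^sub>R T - M ** \<rho> ** M))"
    unfolding loewner_le_def cond_B_given_A_eq K_def[symmetric] M_def[symmetric] r_def[symmetric]
    using r by (simp add: powr_add scaleR_diff_right)
  also have "\<dots> \<longleftrightarrow> loewner_le (M ** \<rho> ** M) (2 powr (l + log 2 r) *\<^sub>R T)"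
    unfolding loewner_le_def using psd_scale_iff[of "1 / r"] r by simp
  also have "\<dots> \<longleftrightarrow> loewner_le \<rho> (2 powr (l + log 2 r) *\<^sub>R (K ** T))"
    unfolding M_def
  proof (rule loewner_conj_gen_inv_sqrt[symmetric])
    show "psd K" unfolding K_def by (intro psd_kron_one_right psd_ptrace \<rho>)
    show "psd T" unfolding T_def by (rule psd_kron_one_left[OF \<sigma>])
    show "hermitian \<rho>" using \<rho> psd_cinner by blast
    show "\<rho> *v x = 0" if "K *v x = 0" for x using ptrace_kernel[OF \<rho>] that unfolding K_def .
  qed (use TK in simp_all)
  finally show "loewner_le (cond_B_given_A \<rho>) (2 powr l *\<^sub>R kron (mat 1) \<sigma>)
      \<longleftrightarrow> loewner_le \<rho> (2 powr (l + log 2 (real (rank (ptrace_B \<rho>)))) *\<^sub>R kron (ptrace_B \<rho>) \<sigma>)"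
    unfolding T_def[symmetric] KT r_def by simp
qed

lemma Imax_eq_nondegenerate:
  fixes \<rho> :: "complex^('a::finite \<times> 'b::finite)^('a \<times> 'b)"
  assumes \<rho>: "psd \<rho>" and r0: "rank (ptrace_B \<rho>) \<noteq> 0"
  shows "Imax \<rho> = H0_A \<rho> - Hmin (cond_B_given_A \<rho>)"
proof -
  define L where "L = log 2 (real (rank (ptrace_B \<rho>)))"
  have "{Dmax (cond_B_given_A \<rho>) (kron (mat 1) \<sigma>) | \<sigma> :: complex^'b^'b. normalized_state \<sigma>}
      = (\<lambda>x. x + ereal (- L)) ` {Dmax \<rho> (kron (ptrace_B \<rho>) \<sigma>) | \<sigma> :: complex^'b^'b. normalized_state \<sigma>}"
    using Dmax_cond_B_given_A[OF \<rho> r0] unfolding normalized_state_def L_def by (auto, metis)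
  then have "Hmin (cond_B_given_A \<rho>) = - (Imax \<rho> + ereal (- L))"
    unfolding Hmin_def Imax_def by (simp add: Inf_shift)
  moreover have "H0_A \<rho> = ereal L" unfolding H0_A_def L_def using r0 by simp
  ultimately show ?thesis by (cases "Imax \<rho>") auto
qed

text \<open>Degenerate case: \<rho>_A = 0 forces \<rho> = 0 by fact (i), and both sides equal -\<infinity>.\<close>
lemma Imax_eq_degenerate:
  fixes \<rho> :: "complex^('a::finite \<times> 'b::finite)^('a \<times> 'b)"
  assumes \<rho>: "psd \<rho>" and r0: "rank (ptrace_B \<rho>) = 0"
  shows "Imax \<rho> = H0_A \<rho> - Hmin (cond_B_given_A \<rho>)"
proof -
  have A0: "ptrace_B \<rho> = 0" using rank_0_imp[OF r0] .
  have "\<rho> *v x = 0" for x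
    by (rule ptrace_kernel[OF \<rho>]) (simp add: A0 kron_zero_left)
  then have \<rho>0: "\<rho> = 0" by (rule mv_zero_imp)
  obtain \<sigma> :: "complex^'b^'b" where \<sigma>: "normalized_state \<sigma>" using normalized_state_exists by blast
  then have "psd \<sigma>" unfolding normalized_state_def by blast
  have "Dmax (cond_B_given_A \<rho>) (kron (mat 1) \<sigma>) = -\<infinity>"
    unfolding cond_B_given_A_def Let_def \<rho>0
    by (simp add: Dmax_zero psd_kron_one_left[OF \<open>psd \<sigma>\<close>])
  then have "Hmin (cond_B_given_A \<rho>) = \<infinity>"
    unfolding Hmin_def using Inf_attains_MInfty[where P=normalized_state, OF \<sigma>] by simp
  moreover have "Dmax \<rho> (kron (ptrace_B \<rho>) \<sigma>) = -\<infinity>"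
    unfolding A0 kron_zero_left unfolding \<rho>0 by (rule Dmax_zero[OF psd_zero_mat])
  then have "Imax \<rho> = -\<infinity>"
    unfolding Imax_def by (rule Inf_attains_MInfty[where P=normalized_state, OF \<sigma>])
  moreover have "H0_A \<rho> = -\<infinity>" unfolding H0_A_def using r0 by simp
  ultimately show ?thesis by simp
qed

theorem mainTheorem16:
  fixes \<rho> :: "complex^('a::finite \<times> 'b::finite)^('a \<times> 'b)"
  assumes "subnormalized_state \<rho>"
  shows "Imax \<rho> = H0_A \<rho> - Hmin (cond_B_given_A \<rho>)"
proof -
  have "psd \<rho>" using assms unfolding subnormalized_state_def by blast
  then show ?thesis
    using Imax_eq_nondegenerate Imax_eq_degenerate by blast
qed

end
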